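(* Let $n,m\in\mathbb N$, $d:=\min\{n,m\}$, $\alpha\in[1,d]$, and $\mathcal S_\alpha:=\{xx^\ast:x\in\mathcal V_\alpha\}$. Then $\mathsf K_\alpha=\mathrm{cone}(\mathcal S_\alpha)$, i.e. the convex cone generated by $\mathcal S_\alpha$ is already closed.
   Context: For $\psi=\sum_{i,j}a_{ij}e_i\otimes f_j\in\mathbb C^n\otimes\mathbb C^m$, its Schmidt coefficients $s_1(\psi)\ge\dots\ge s_d(\psi)\ge0$ are the singular values of $[a_{ij}]$. For $\alpha\in[1,d]$ with $k=\lfloor\alpha\rfloor$, $\theta=\alpha-k$, $r=\lceil\alpha\rceil$, a unit vector $\psi$ is $\alpha$-admissible if $s_j(\psi)=0$ for $j\ge r+1$ and, when $\theta>0$, $s_{k+1}(\psi)\le\frac\theta k\sum_{j=1}^ks_j(\psi)$; $\mathcal V_\alpha$ is the set of these. $\mathrm{cone}(S)$ denotes the set of finite nonnegative combinations of elements of $S$, and $\mathsf K_\alpha$ is defined as the closure of $\mathrm{cone}(\mathcal S_\alpha)$. *)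

theory Defs
  imports "HOL-Analysis.Analysis" "HOL-Computational_Algebra.Polynomial"
begin

text \<open>A vector psi in C^n (x) C^m is represented by its coefficient matrix
  [a_ij], an element of complex^'m^'n (rows indexed by 'n, columns by 'm);
  n = CARD('n), m = CARD('m).  The Hilbert-space norm of psi is the
  Frobenius norm, which is the norm of this type.\<close>

definition conj_transpose :: "complex^'m^'n \<Rightarrow> complex^'n^'m" where
  "conj_transpose A = (\<chi> i j. cnj (A $ j $ i))"

definition char_polyc :: "complex^'n^'n \<Rightarrow> complex poly" where
  "char_polyc M = det (\<chi> i j. (if i = j then [:0, 1:] else 0) - [:M $ i $ j:])"

definition eigvals_mset :: "complex^'n^'n \<Rightarrow> complex multiset" where
  "eigvals_mset M = proots (char_polyc M)"

text \<open>Schmidt coefficients s_1 >= ... >= s_d of psi, d = min n m: the singular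
  values of the coefficient matrix A, i.e. the square roots of the d largest
  eigenvalues (with multiplicity) of the positive semidefinite matrix A A^*.\<close>
definition schmidt_coeffs :: "complex^('m::finite)^('n::finite) \<Rightarrow> real list" where
  "schmidt_coeffs A =
     map sqrt (take (min CARD('n) CARD('m))
       (rev (sorted_list_of_multiset (image_mset Re (eigvals_mset (A ** conj_transpose A))))))"

definition schmidt :: "complex^('m::finite)^('n::finite) \<Rightarrow> nat \<Rightarrow> real" where
  "schmidt A j = schmidt_coeffs A ! (j - 1)"

definition admissible :: "real \<Rightarrow> complex^('m::finite)^('n::finite) \<Rightarrow> bool" where
  "admissible \<alpha> A \<longleftrightarrow>
     (let k = nat \<lfloor>\<alpha>\<rfloor>; \<theta> = \<alpha> - real k; r = nat \<lceil>\<alpha>\<rceil>; d = min CARD('n) CARD('m) in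
      norm A = 1 \<and>
      (\<forall>j. r + 1 \<le> j \<and> j \<le> d \<longrightarrow> schmidt A j = 0) \<and>
      (\<theta> > 0 \<longrightarrow> schmidt A (k + 1) \<le> \<theta> / real k * (\<Sum>j = 1..k. schmidt A j)))"

definition V_set :: "real \<Rightarrow> (complex^('m::finite)^('n::finite)) set" where
  "V_set \<alpha> = {A. admissible \<alpha> A}"

definition outer :: "complex^('m::finite)^('n::finite) \<Rightarrow> complex^('n \<times> 'm)^('n \<times> 'm)" where
  "outer A = (\<chi> p q. A $ fst p $ snd p * cnj (A $ fst q $ snd q))"

definition S_set :: "real \<Rightarrow> 'n itself \<Rightarrow> 'm itself \<Rightarrow> (complex^('n::finite \<times> 'm::finite)^('n \<times> 'm)) set" where
  "S_set \<alpha> _ _ = {outer x | x :: complex^'m^'n. x \<in> V_set \<alpha>}"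

definition cone_gen :: "'a::real_vector set \<Rightarrow> 'a set" where
  "cone_gen S = {x. \<exists>F c. finite F \<and> F \<subseteq> S \<and> (\<forall>v\<in>F. c v \<ge> 0) \<and> x = (\<Sum>v\<in>F. c v *\<^sub>R v)}"

definition K_set :: "real \<Rightarrow> 'n itself \<Rightarrow> 'm itself \<Rightarrow> (complex^('n::finite \<times> 'm::finite)^('n \<times> 'm)) set" where
  "K_set \<alpha> tn tm = closure (cone_gen (S_set \<alpha> tn tm))"

end

theory Submission
  imports Defs "HOL-Computational_Algebra.Fundamental_Theorem_Algebra"
begin

text \<open>The set \<open>cone(S)\<close> is \<open>{0}\<close> together with the conic hull of the convex hull of \<open>S\<close>,
  and the conic hull of a compact set not containing \<open>0\<close> is closed.  All rank-one projections
  \<open>x x\<^sup>*\<close> with \<open>\<parallel>x\<parallel> = 1\<close> have trace one, so \<open>0\<close> is not in the convex hull of \<open>S\<^sub>\<alpha>\<close>.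
  Compactness of \<open>S\<^sub>\<alpha>\<close> reduces to closedness of \<open>V\<^sub>\<alpha>\<close>, i.e. to continuity of the Schmidt
  coefficients: the eigenvalues of \<open>A A\<^sup>*\<close> are the real roots of its characteristic polynomial
  \<open>p\<close>, they are bounded by \<open>|p(i)|\<close>, and along a convergent sequence of matrices every
  convergent subsequence of the sorted eigenvalues tends to the sorted roots of the limit
  polynomial.\<close>

definition gram :: "complex^'m::finite^'n::finite \<Rightarrow> complex^'n^'n" where
  "gram A = A ** conj_transpose A"

definition real_spectrum :: "complex^'n::finite^'n \<Rightarrow> bool" where
  "real_spectrum M \<longleftrightarrow> (\<forall>z. poly (char_polyc M) z = 0 \<longrightarrow> Im z = 0)"

definition eigenvalues_desc :: "complex^'n::finite^'n \<Rightarrow> real list" where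
  "eigenvalues_desc M = rev (sorted_list_of_multiset (image_mset Re (eigvals_mset M)))"

lemma schmidt_coeffs_eq:
  fixes A :: "complex^'m::finite^'n::finite"
  shows "schmidt_coeffs A = map sqrt (take (min CARD('n) CARD('m)) (eigenvalues_desc (gram A)))"
  unfolding schmidt_coeffs_def eigenvalues_desc_def gram_def ..

lemma gram_nth: "gram A $ i $ j = (\<Sum>l\<in>UNIV. A$i$l * cnj (A$j$l))"
  unfolding gram_def by (simp add: matrix_matrix_mult_def conj_transpose_def)

lemma poly_char_polyc:
  "poly (char_polyc (M::complex^'n::finite^'n)) z = det (\<chi> i j. (if i = j then z else 0) - M$i$j)"
  unfolding char_polyc_def det_def
  by (simp add: poly_sum poly_prod, intro sum.cong prod.cong refl arg_cong2[where f="(*)"]) auto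

lemma
  fixes M :: "complex^'n::finite^'n"
  shows degree_char_polyc: "degree (char_polyc M) = CARD('n)"
    and lead_coeff_char_polyc: "lead_coeff (char_polyc M) = 1"
proof -
  define P where "P = (\<lambda>i j. (if i = j then [:0, 1:] else 0) - [:M $ i $ j:])"
  define T where "T = (\<lambda>p. of_int (sign p) * (\<Prod>i\<in>UNIV. P i (p i)) :: complex poly)"
  define Perms where "Perms = {p. p permutes (UNIV::'n set)}"
  define R where "R = (\<Sum>p\<in>Perms - {id}. T p)"
  have "finite Perms" "id \<in> Perms"
    unfolding Perms_def by (simp_all add: finite_permutations)
  then have char_polyc_split: "char_polyc M = T id + R"
    unfolding R_def sum.remove[OF \<open>finite Perms\<close> \<open>id \<in> Perms\<close>, symmetric]
    unfolding char_polyc_def det_def T_def P_def Perms_def by simp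
  have T_id: "T id = (\<Prod>i\<in>UNIV. [:- M$i$i, 1:])"
    unfolding T_def P_def by simp
  have degree_T_id: "degree (T id) = CARD('n)"
    unfolding T_id by (subst degree_prod_eq_sum_degree) auto
  \<comment> \<open>a permutation other than the identity misses a diagonal entry, hence a factor of degree 1\<close>
  have degree_T: "degree (T p) < CARD('n)" if "p \<noteq> id" for p
  proof -
    obtain i0 where i0: "p i0 \<noteq> i0" using \<open>p \<noteq> id\<close> by (metis eq_id_iff)
    have "degree (T p) \<le> (\<Sum>i\<in>UNIV. degree (P i (p i)))"
      unfolding T_def using degree_prod_sum_le[of UNIV "\<lambda>i. P i (p i)"]
      by (intro order_trans[OF degree_mult_le]) (simp add: o_def)
    also have "\<dots> < (\<Sum>i\<in>(UNIV::'n set). 1)"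
      by (rule sum_strict_mono_ex1) (use i0 in \<open>auto simp: P_def, metis\<close>)
    finally show ?thesis by simp
  qed
  have "degree R < degree (T id)"
  proof (cases "CARD('n) = 0")
    case False
    have "degree R \<le> CARD('n) - 1"
      unfolding R_def using \<open>finite Perms\<close> degree_T
      by (intro degree_sum_le) (auto simp: less_Suc_eq_le[symmetric])
    then show ?thesis using False degree_T_id by linarith
  qed simp
  moreover have "lead_coeff (T id) = 1"
    unfolding T_id by (simp add: lead_coeff_prod)
  ultimately show "degree (char_polyc M) = CARD('n)" "lead_coeff (char_polyc M) = 1"
    using lead_coeff_add_le[of R "T id"]
    by (simp_all add: char_polyc_split degree_add_eq_right degree_T_id add.commute)
qed

lemma det_eq_0_imp_kernel:
  fixes B :: "'a::field^'n::finite^'n"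
  assumes "det B = 0"
  obtains v where "v \<noteq> 0" "B *v v = 0"
  using assms invertible_det_nz invertible_left_inverse matrix_left_invertible_ker by metis

lemma sum_cnj_mult_self: "(\<Sum>i\<in>I. cnj (f i) * f i) = of_real (\<Sum>i\<in>I. (cmod (f i))\<^sup>2)"
  by (simp only: of_real_sum complex_norm_square mult.commute)

lemma quadratic_form_gram:
  fixes A :: "complex^'m::finite^'n::finite"
  shows "(\<Sum>i\<in>UNIV. cnj (v$i) * (gram A *v v)$i)
           = of_real (\<Sum>l\<in>UNIV. (cmod ((conj_transpose A *v v)$l))\<^sup>2)"
proof -
  define w where "w = conj_transpose A *v v"
  have w: "w$l = (\<Sum>j\<in>UNIV. cnj (A$j$l) * v$j)" for l
    unfolding w_def by (simp add: matrix_vector_mult_def conj_transpose_def)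
  have "(\<Sum>i\<in>UNIV. cnj (v$i) * (gram A *v v)$i)
          = (\<Sum>i\<in>UNIV. \<Sum>j\<in>UNIV. \<Sum>l\<in>UNIV. cnj (v$i) * A$i$l * (cnj (A$j$l) * v$j))"
    by (simp add: matrix_vector_mult_def gram_nth sum_distrib_left sum_distrib_right mult.assoc)
  also have "\<dots> = (\<Sum>l\<in>UNIV. \<Sum>i\<in>UNIV. \<Sum>j\<in>UNIV. cnj (v$i) * A$i$l * (cnj (A$j$l) * v$j))"
    by (subst sum.swap, subst (2) sum.swap) (rule refl)
  also have "\<dots> = (\<Sum>l\<in>UNIV. (\<Sum>i\<in>UNIV. cnj (v$i) * A$i$l) * (\<Sum>j\<in>UNIV. cnj (A$j$l) * v$j))"
    by (simp only: sum_product)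
  also have "\<dots> = (\<Sum>l\<in>UNIV. cnj (w$l) * w$l)"
    by (simp add: w mult.commute)
  finally show ?thesis unfolding w_def sum_cnj_mult_self .
qed

lemma real_spectrum_gram: "real_spectrum (gram A)"
  unfolding real_spectrum_def
proof (intro allI impI)
  fix z assume "poly (char_polyc (gram A)) z = 0"
  then obtain v where "v \<noteq> 0" and kernel: "(\<chi> i j. (if i = j then z else 0) - gram A$i$j) *v v = 0"
    unfolding poly_char_polyc by (rule det_eq_0_imp_kernel)
  have eigenvector: "(gram A *v v)$i = z * v$i" for i
  proof -
    have "0 = (\<Sum>j\<in>UNIV. ((if i = j then z else 0) - gram A$i$j) * v$j)"
      using arg_cong[OF kernel, of "\<lambda>x. x$i"] by (simp add: matrix_vector_mult_def)
    also have "\<dots> = z * v$i - (gram A *v v)$i"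
      by (simp add: matrix_vector_mult_def left_diff_distrib sum_subtractf if_distrib[of "\<lambda>x. x * _"] cong: if_cong)
    finally show ?thesis by simp
  qed
  have "z * (\<Sum>i\<in>UNIV. cnj (v$i) * v$i) = (\<Sum>i\<in>UNIV. cnj (v$i) * (gram A *v v)$i)"
    by (simp add: eigenvector sum_distrib_left mult.left_commute)
  then have eq: "z * of_real (\<Sum>i\<in>UNIV. (cmod (v$i))\<^sup>2)
               = of_real (\<Sum>l\<in>UNIV. (cmod ((conj_transpose A *v v)$l))\<^sup>2)"
    unfolding quadratic_form_gram sum_cnj_mult_self .
  obtain i where "v$i \<noteq> 0" using \<open>v \<noteq> 0\<close> by (metis vec_eq_iff zero_index)
  then have "(\<Sum>i\<in>UNIV. (cmod (v$i))\<^sup>2) > 0"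
    by (intro sum_pos2[where i=i]) auto
  with arg_cong[OF eq, of Im] show "Im z = 0" by simp
qed

lemma mset_eigenvalues_desc: "mset (eigenvalues_desc M) = image_mset Re (eigvals_mset M)"
  by (simp add: eigenvalues_desc_def)

lemma length_eigenvalues_desc: "length (eigenvalues_desc (M::complex^'n::finite^'n)) = CARD('n)"
  by (metis mset_eigenvalues_desc size_mset size_image_mset eigvals_mset_def
      size_proots_complex degree_char_polyc)

lemma eigenvalues_desc_antimono:
  fixes M :: "complex^'n::finite^'n"
  assumes "i \<le> j" "j < CARD('n)"
  shows "eigenvalues_desc M ! j \<le> eigenvalues_desc M ! i"
proof -
  have "sorted (rev (eigenvalues_desc M))"
    by (simp add: eigenvalues_desc_def)
  then show ?thesis
    using assms by (simp add: sorted_rev_iff_nth_mono length_eigenvalues_desc)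
qed

lemma poly_char_polyc_eq_prod_eigenvalues:
  fixes M :: "complex^'n::finite^'n"
  assumes "real_spectrum M"
  shows "poly (char_polyc M) z = (\<Prod>i<CARD('n). z - of_real (eigenvalues_desc M ! i))"
proof -
  define R where "R = proots (char_polyc M)"
  have "char_polyc M \<noteq> 0"
    using lead_coeff_char_polyc[of M] by auto
  then have R_real: "of_real (Re x) = x" if "x \<in># R" for x
    using assms that unfolding real_spectrum_def R_def by (simp add: complex_eq_iff)
  have "char_polyc M = (\<Prod>x\<in>#R. [:-x, 1:])"
    using complex_poly_decompose_multiset[of "char_polyc M"] by (simp add: R_def lead_coeff_char_polyc)
  then have "poly (char_polyc M) z = (\<Prod>x\<in>#R. z - x)"
    by (simp add: poly_prod_mset multiset.map_comp o_def)
  also have "\<dots> = (\<Prod>y\<in>#image_mset Re R. z - of_real y)"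
    by (simp add: multiset.map_comp o_def R_real cong: image_mset_cong)
  also have "image_mset Re R = mset (eigenvalues_desc M)"
    by (simp add: R_def mset_eigenvalues_desc eigvals_mset_def)
  finally show ?thesis
    by (simp flip: mset_map add: prod_mset_prod_list prod.list_conv_set_nth
        length_eigenvalues_desc atLeast0LessThan)
qed

lemma eigenvalues_desc_eqI:
  fixes M :: "complex^'n::finite^'n"
  assumes char: "\<And>z. poly (char_polyc M) z = (\<Prod>i<CARD('n). z - of_real (\<mu> i))"
    and antimono: "\<And>i j. i \<le> j \<Longrightarrow> j < CARD('n) \<Longrightarrow> \<mu> j \<le> \<mu> i"
  shows "eigenvalues_desc M = map \<mu> [0..<CARD('n)]"
proof -
  have "char_polyc M = (\<Prod>i<CARD('n). [:- of_real (\<mu> i), 1:])"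
    by (rule poly_eq_poly_eq_iff[THEN iffD1]) (simp add: fun_eq_iff char poly_prod)
  then have mset_eq: "image_mset Re (eigvals_mset M) = mset (map \<mu> [0..<CARD('n)])"
    by (simp add: eigvals_mset_def proots_prod sum_unfold_sum_mset multiset.map_comp o_def
        atLeast0LessThan[symmetric])
  have "sorted (rev (map \<mu> [0..<CARD('n)]))"
    unfolding sorted_rev_iff_nth_mono using antimono by auto
  then have "sort (map \<mu> [0..<CARD('n)]) = rev (map \<mu> [0..<CARD('n)])"
    by (intro properties_for_sort) auto
  then show ?thesis
    unfolding eigenvalues_desc_def mset_eq sorted_list_of_multiset_mset by simp
qed

lemma abs_eigenvalue_le_cmod_poly_char_polyc_ii:
  fixes M :: "complex^'n::finite^'n"
  assumes "real_spectrum M" "i < CARD('n)"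
  shows "\<bar>eigenvalues_desc M ! i\<bar> \<le> cmod (poly (char_polyc M) \<i>)"
proof -
  \<comment> \<open>every factor \<open>|\<i> - \<lambda>\<^sub>j|\<close> of \<open>|p(\<i>)|\<close> is at least \<open>max 1 |\<lambda>\<^sub>j|\<close>\<close>
  define f where "f j = cmod (\<i> - of_real (eigenvalues_desc M ! j))" for j
  have f: "1 \<le> f j" "\<bar>eigenvalues_desc M ! j\<bar> \<le> f j" for j
    unfolding f_def cmod_def by (simp_all add: real_le_rsqrt)
  have "1 \<le> (\<Prod>j\<in>{..<CARD('n)} - {i}. f j)"
    using f(1) by (simp add: prod_ge_1)
  then have "\<bar>eigenvalues_desc M ! i\<bar> \<le> f i * (\<Prod>j\<in>{..<CARD('n)} - {i}. f j)"
    using f(2)[of i] by (smt (verit) mult_le_cancel_left1 abs_ge_zero)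
  also have "\<dots> = cmod (poly (char_polyc M) \<i>)"
    using assms by (simp add: poly_char_polyc_eq_prod_eigenvalues prod_norm f_def prod.remove norm_mult)
  finally show ?thesis .
qed

lemma tendsto_poly_char_polyc:
  fixes M :: "'a \<Rightarrow> complex^'n::finite^'n"
  assumes "(M \<longlongrightarrow> M0) F"
  shows "((\<lambda>k. poly (char_polyc (M k)) z) \<longlongrightarrow> poly (char_polyc M0) z) F"
  unfolding poly_char_polyc det_def by (intro tendsto_intros assms)

lemma tendsto_gram:
  fixes X :: "'a \<Rightarrow> complex^'m::finite^'n::finite"
  assumes "(X \<longlongrightarrow> A) F"
  shows "((\<lambda>k. gram (X k)) \<longlongrightarrow> gram A) F"
proof -
  have gram_lambda: "gram B = (\<chi> i j. \<Sum>l\<in>UNIV. B$i$l * cnj (B$j$l))" for B :: "complex^'m^'n"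
    by (simp add: vec_eq_iff gram_nth)
  show ?thesis
    unfolding gram_lambda by (intro tendsto_intros assms)
qed

lemma bounded_family_convergent_subseq:
  fixes f :: "nat \<Rightarrow> nat \<Rightarrow> 'a::heine_borel"
  assumes "\<And>i. i < N \<Longrightarrow> bounded (range (\<lambda>k. f k i))"
  obtains s \<mu> where "strict_mono s" "\<And>i. i < N \<Longrightarrow> (\<lambda>k. f (s k) i) \<longlonglongrightarrow> \<mu> i"
  using assms
proof (induction N arbitrary: thesis)
  case 0
  show ?case by (rule "0.prems"(1)[of id]) (auto simp: strict_mono_def)
next
  case (Suc N)
  obtain s \<mu> where s: "strict_mono s" and lim: "\<And>i. i < N \<Longrightarrow> (\<lambda>k. f (s k) i) \<longlonglongrightarrow> \<mu> i"
    using Suc.IH Suc.prems(2) by (metis less_SucI)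
  have "bounded (range (\<lambda>k. f (s k) N))"
    by (rule bounded_subset[OF Suc.prems(2)[of N]]) auto
  then obtain l r where r: "strict_mono r" and lr: "((\<lambda>k. f (s k) N) \<circ> r) \<longlonglongrightarrow> l"
    using bounded_imp_convergent_subsequence by blast
  show ?case
  proof (rule Suc.prems(1)[of "s \<circ> r" "\<mu>(N := l)"])
    show "strict_mono (s \<circ> r)" using s r by (rule strict_mono_o)
    fix i assume "i < Suc N"
    then consider "i = N" | "i < N" by linarith
    then show "(\<lambda>k. f ((s \<circ> r) k) i) \<longlonglongrightarrow> (\<mu>(N := l)) i"
    proof cases
      case 2
      then show ?thesis using LIMSEQ_subseq_LIMSEQ[OF lim r] by (simp add: o_def)
    qed (use lr in \<open>simp add: o_def\<close>)
  qed
qed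

lemma eigenvalues_desc_convergent_subseq:
  fixes M :: "nat \<Rightarrow> complex^'n::finite^'n"
  assumes lim: "M \<longlonglongrightarrow> M0" and real: "\<And>k. real_spectrum (M k)"
  obtains s where "strict_mono s"
    "\<And>i. i < CARD('n) \<Longrightarrow> (\<lambda>k. eigenvalues_desc (M (s k)) ! i) \<longlonglongrightarrow> eigenvalues_desc M0 ! i"
proof -
  define f where "f k i = eigenvalues_desc (M k) ! i" for k i
  obtain B where B: "\<And>k. cmod (poly (char_polyc (M k)) \<i>) \<le> B"
    using convergent_imp_bounded[OF tendsto_poly_char_polyc[OF lim]] unfolding bounded_iff by auto
  have "bounded (range (\<lambda>k. f k i))" if "i < CARD('n)" for i
    unfolding bounded_iff f_def
    using abs_eigenvalue_le_cmod_poly_char_polyc_ii[OF real that] B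
    by (auto intro!: exI[of _ B] intro: order_trans)
  then obtain s \<mu> where s: "strict_mono s"
    and lim_\<mu>: "\<And>i. i < CARD('n) \<Longrightarrow> (\<lambda>k. f (s k) i) \<longlonglongrightarrow> \<mu> i"
    using bounded_family_convergent_subseq by blast
  have "poly (char_polyc M0) z = (\<Prod>i<CARD('n). z - of_real (\<mu> i))" for z
  proof (rule LIMSEQ_unique)
    show "(\<lambda>k. poly (char_polyc (M (s k))) z) \<longlonglongrightarrow> poly (char_polyc M0) z"
      using LIMSEQ_subseq_LIMSEQ[OF tendsto_poly_char_polyc[OF lim] s] by (simp add: o_def)
    show "(\<lambda>k. poly (char_polyc (M (s k))) z) \<longlonglongrightarrow> (\<Prod>i<CARD('n). z - of_real (\<mu> i))"
      unfolding poly_char_polyc_eq_prod_eigenvalues[OF real]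
      using lim_\<mu> by (intro tendsto_intros) (simp add: f_def)
  qed
  moreover have "\<mu> j \<le> \<mu> i" if "i \<le> j" "j < CARD('n)" for i j
  proof (rule LIMSEQ_le[OF lim_\<mu> lim_\<mu>])
    show "\<exists>N. \<forall>k\<ge>N. f (s k) j \<le> f (s k) i"
      using that by (simp add: f_def eigenvalues_desc_antimono)
  qed (use that in auto)
  ultimately have "eigenvalues_desc M0 = map \<mu> [0..<CARD('n)]"
    by (rule eigenvalues_desc_eqI)
  then show ?thesis
    using that[OF s] lim_\<mu> by (simp add: f_def)
qed

lemma schmidt_eq_sqrt_eigenvalue:
  fixes A :: "complex^'m::finite^'n::finite"
  assumes "1 \<le> j" "j \<le> min CARD('n) CARD('m)"
  shows "schmidt A j = sqrt (eigenvalues_desc (gram A) ! (j - 1))"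
proof -
  have "j - 1 < length (take (min CARD('n) CARD('m)) (eigenvalues_desc (gram A)))"
    using assms by (simp add: length_eigenvalues_desc) arith
  then show ?thesis
    by (simp add: schmidt_def schmidt_coeffs_eq)
qed

lemma schmidt_convergent_subseq:
  fixes X :: "nat \<Rightarrow> complex^'m::finite^'n::finite"
  assumes "X \<longlonglongrightarrow> A"
  obtains s where "strict_mono s"
    "\<And>j. 1 \<le> j \<Longrightarrow> j \<le> min CARD('n) CARD('m) \<Longrightarrow> (\<lambda>k. schmidt (X (s k)) j) \<longlonglongrightarrow> schmidt A j"
proof -
  obtain s where s: "strict_mono s" and lim: "\<And>i. i < CARD('n) \<Longrightarrow>
      (\<lambda>k. eigenvalues_desc (gram (X (s k))) ! i) \<longlonglongrightarrow> eigenvalues_desc (gram A) ! i"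
    using eigenvalues_desc_convergent_subseq[OF tendsto_gram[OF assms] real_spectrum_gram]
    by blast
  show ?thesis
  proof (rule that[OF s])
    fix j assume j: "1 \<le> j" "j \<le> min CARD('n) CARD('m)"
    then have "j - 1 < CARD('n)" by arith
    with j show "(\<lambda>k. schmidt (X (s k)) j) \<longlonglongrightarrow> schmidt A j"
      using lim[of "j - 1"] by (simp add: schmidt_eq_sqrt_eigenvalue tendsto_real_sqrt)
  qed
qed

lemma closed_V_set:
  assumes "\<alpha> \<le> real (min CARD('n::finite) CARD('m::finite))"
  shows "closed (V_set \<alpha> :: (complex^'m^'n) set)"
  unfolding closed_sequential_limits
proof (intro allI impI, elim conjE)
  fix X :: "nat \<Rightarrow> complex^'m^'n" and A
  assume "\<forall>n. X n \<in> V_set \<alpha>" and X: "X \<longlonglongrightarrow> A"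
  define k where "k = nat \<lfloor>\<alpha>\<rfloor>"
  define \<theta> where "\<theta> = \<alpha> - real k"
  define r where "r = nat \<lceil>\<alpha>\<rceil>"
  define d where "d = min CARD('n) CARD('m)"
  have adm: "norm (X n) = 1" "\<And>j. r + 1 \<le> j \<Longrightarrow> j \<le> d \<Longrightarrow> schmidt (X n) j = 0"
     "\<theta> > 0 \<Longrightarrow> schmidt (X n) (k + 1) \<le> \<theta> / real k * (\<Sum>j = 1..k. schmidt (X n) j)" for n
    using \<open>\<forall>n. X n \<in> V_set \<alpha>\<close> unfolding V_set_def admissible_def Let_def k_def \<theta>_def r_def d_def by auto
  obtain s where lim: "\<And>j. 1 \<le> j \<Longrightarrow> j \<le> d \<Longrightarrow> (\<lambda>k. schmidt (X (s k)) j) \<longlonglongrightarrow> schmidt A j"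
    using schmidt_convergent_subseq[OF X] unfolding d_def by blast
  have "norm A = 1"
    using tendsto_norm[OF X] by (simp add: adm(1) LIMSEQ_const_iff)
  moreover have "schmidt A j = 0" if "r + 1 \<le> j" "j \<le> d" for j
    using lim[of j] that by (simp add: adm(2) LIMSEQ_const_iff)
  moreover have "schmidt A (k + 1) \<le> \<theta> / real k * (\<Sum>j = 1..k. schmidt A j)" if "\<theta> > 0"
  proof (rule LIMSEQ_le)
    have "real k < real d" using that assms unfolding \<theta>_def d_def by linarith
    then have "k + 1 \<le> d" by linarith
    then show "(\<lambda>n. schmidt (X (s n)) (k + 1)) \<longlonglongrightarrow> schmidt A (k + 1)"
      using lim by simp
    show "(\<lambda>n. \<theta> / real k * (\<Sum>j = 1..k. schmidt (X (s n)) j)) \<longlonglongrightarrow> \<theta> / real k * (\<Sum>j = 1..k. schmidt A j)"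
      using lim \<open>k + 1 \<le> d\<close> by (intro tendsto_mult_left tendsto_sum) auto
    show "\<exists>N. \<forall>n\<ge>N. schmidt (X (s n)) (k + 1) \<le> \<theta> / real k * (\<Sum>j = 1..k. schmidt (X (s n)) j)"
      using adm(3)[OF that] by auto
  qed
  ultimately show "A \<in> V_set \<alpha>"
    unfolding V_set_def admissible_def Let_def k_def \<theta>_def r_def d_def by auto
qed

lemma norm_eq_1_if_admissible: "admissible \<alpha> A \<Longrightarrow> norm A = 1"
  unfolding admissible_def Let_def by (elim conjE)

lemma continuous_outer: "continuous_on UNIV outer"
  unfolding outer_def
  by (intro continuous_on_vec_lambda continuous_on_mult continuous_on_cnj
      continuous_on_component continuous_on_id)

lemma compact_S_set:
  assumes "\<alpha> \<le> real (min CARD('n::finite) CARD('m::finite))"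
  shows "compact (S_set \<alpha> TYPE('n) TYPE('m))"
proof -
  have "bounded (V_set \<alpha> :: (complex^'m^'n) set)"
    by (rule bounded_subset[OF bounded_cball[of 0 1]])
      (auto simp: V_set_def dest: norm_eq_1_if_admissible)
  then have "compact (V_set \<alpha> :: (complex^'m^'n) set)"
    using closed_V_set[OF assms] by (simp add: compact_eq_bounded_closed)
  moreover have "S_set \<alpha> TYPE('n) TYPE('m) = outer ` (V_set \<alpha> :: (complex^'m^'n) set)"
    unfolding S_set_def by auto
  ultimately show ?thesis
    by (auto intro: compact_continuous_image continuous_on_subset[OF continuous_outer])
qed

lemma cone_gen_eq_conic_hull_convex_hull:
  fixes S :: "'a::real_vector set"
  shows "cone_gen S = insert 0 (conic hull (convex hull S))"
proof
  show "cone_gen S \<subseteq> insert 0 (conic hull (convex hull S))"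
  proof
    fix x assume "x \<in> cone_gen S"
    then obtain F c where F: "finite F" "F \<subseteq> S" "\<forall>v\<in>F. c v \<ge> 0" and x: "x = (\<Sum>v\<in>F. c v *\<^sub>R v)"
      unfolding cone_gen_def by blast
    define t where "t = sum c F"
    have "t \<ge> 0" unfolding t_def using F(3) by (simp add: sum_nonneg)
    show "x \<in> insert 0 (conic hull (convex hull S))"
    proof (cases "t = 0")
      case True
      then have "x = 0" using x F sum_nonneg_eq_0_iff[of F c] unfolding t_def by simp
      then show ?thesis by simp
    next
      case False
      have "(\<Sum>v\<in>F. (c v / t) *\<^sub>R v) \<in> convex hull S"
        using F False \<open>t \<ge> 0\<close> unfolding t_def
        by (intro convex_sum convex_convex_hull) (auto simp: sum_divide_distrib[symmetric] hull_inc)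
      moreover have "x = t *\<^sub>R (\<Sum>v\<in>F. (c v / t) *\<^sub>R v)"
        using False unfolding x by (simp add: scaleR_sum_right)
      ultimately show ?thesis
        using \<open>t \<ge> 0\<close> unfolding conic_hull_explicit by blast
    qed
  qed
  show "insert 0 (conic hull (convex hull S)) \<subseteq> cone_gen S"
  proof
    fix x assume "x \<in> insert 0 (conic hull (convex hull S))"
    then consider "x = 0" | c y where "c \<ge> 0" "y \<in> convex hull S" "x = c *\<^sub>R y"
      unfolding conic_hull_explicit by blast
    then show "x \<in> cone_gen S"
    proof cases
      case 1
      show ?thesis unfolding cone_gen_def 1 by (intro CollectI exI[of _ "{}"]) simp
    next
      case 2
      then obtain F u where F: "finite F" "F \<subseteq> S" "\<forall>v\<in>F. 0 \<le> u v" "(\<Sum>v\<in>F. u v *\<^sub>R v) = y"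
        unfolding convex_hull_explicit by blast
      have "x = (\<Sum>v\<in>F. (c * u v) *\<^sub>R v)"
        unfolding 2(3) F(4)[symmetric] by (simp add: scaleR_sum_right)
      then show ?thesis
        using F 2(1) unfolding cone_gen_def by (intro CollectI exI[of _ F] exI[of _ "\<lambda>v. c * u v"]) auto
    qed
  qed
qed

lemma closed_cone_gen:
  fixes S :: "'a::euclidean_space set"
  assumes "compact S" "0 \<notin> convex hull S"
  shows "closed (cone_gen S)"
  unfolding cone_gen_eq_conic_hull_convex_hull
  by (intro closed_insert closed_conic_hull disjI2 conjI compact_convex_hull assms)

lemma Re_trace_outer: "Re (trace (outer A)) = (norm A)\<^sup>2"
proof -
  have "Re (trace (outer A)) = (\<Sum>p\<in>UNIV. (cmod (A $ fst p $ snd p))\<^sup>2)"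
    unfolding trace_def outer_def by (simp add: complex_norm_square[symmetric] del: of_real_power)
  also have "\<dots> = (\<Sum>i\<in>UNIV. \<Sum>j\<in>UNIV. (cmod (A$i$j))\<^sup>2)"
    by (simp add: sum.cartesian_product case_prod_unfold flip: UNIV_Times_UNIV)
  also have "\<dots> = (norm A)\<^sup>2"
    by (simp add: norm_vec_def L2_set_def sum_nonneg)
  finally show ?thesis .
qed

lemma zero_notin_convex_hull_S_set: "0 \<notin> convex hull (S_set \<alpha> TYPE('n::finite) TYPE('m::finite))"
proof -
  have "convex {P :: complex^('n \<times> 'm)^('n \<times> 'm). Re (trace P) = 1}"
    unfolding convex_def trace_def by (simp add: sum.distrib flip: sum_distrib_left)
  moreover have "S_set \<alpha> TYPE('n) TYPE('m) \<subseteq> {P. Re (trace P) = 1}"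
    unfolding S_set_def V_set_def by (auto dest: norm_eq_1_if_admissible simp: Re_trace_outer)
  ultimately have "convex hull (S_set \<alpha> TYPE('n) TYPE('m)) \<subseteq> {P. Re (trace P) = 1}"
    by (rule hull_minimal[rotated])
  then show ?thesis by (auto simp: trace_def)
qed

theorem corollary3p6:
  fixes \<alpha> :: real
  assumes "1 \<le> \<alpha>" and "\<alpha> \<le> real (min CARD('n::finite) CARD('m::finite))"
  shows "K_set \<alpha> TYPE('n) TYPE('m) = cone_gen (S_set \<alpha> TYPE('n) TYPE('m))"
  unfolding K_set_def
  using closed_cone_gen[OF compact_S_set[OF assms(2)] zero_notin_convex_hull_S_set] by simp

end
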